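(* For every graph $G$ and every field $\mathbb{F}$, $\chi(G)\le 2$ if and only if $\overline{\xi}_l(G,\mathbb{F})\le 2$.
   Context: An orthogonal representation of $G=(V,E)$ over $\mathbb{F}$ assigns $u_v\in\mathbb{F}^t$ to each $v$ with $\langle u_v,u_v\rangle\ne0$ and $\langle u_v,u_{v'}\rangle=0$ for adjacent $v,v'$, where $\langle x,y\rangle=\sum_i x_iy_i$ (over $\mathbb{C}$ one may use $\sum_i x_i\overline{y_i}$). Its locality is $\max_v\dim\mathrm{span}\{u_{v'}:v'\in\{v\}\cup N(v)\}$. $\overline{\xi}_l(G,\mathbb{F})$ is the minimum locality of an orthogonal representation of $G$ over $\mathbb{F}$; $\chi(G)$ is the chromatic number. *)

theory Defs
  imports Complex_Main "HOL-Library.Function_Algebras"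
begin

definition graph :: "'v set \<Rightarrow> ('v \<Rightarrow> 'v \<Rightarrow> bool) \<Rightarrow> bool" where
  "graph V E \<longleftrightarrow> finite V \<and> (\<forall>x y. E x y \<longrightarrow> E y x) \<and> (\<forall>x. \<not> E x x)"

definition neighbours :: "'v set \<Rightarrow> ('v \<Rightarrow> 'v \<Rightarrow> bool) \<Rightarrow> 'v \<Rightarrow> 'v set" where
  "neighbours V E v = {w \<in> V. E v w}"

definition colourable :: "'v set \<Rightarrow> ('v \<Rightarrow> 'v \<Rightarrow> bool) \<Rightarrow> nat \<Rightarrow> bool" where
  "colourable V E k \<longleftrightarrow> (\<exists>c :: 'v \<Rightarrow> nat. (\<forall>v\<in>V. c v < k) \<and>
      (\<forall>v\<in>V. \<forall>w\<in>V. E v w \<longrightarrow> c v \<noteq> c w))"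

definition chromatic_number :: "'v set \<Rightarrow> ('v \<Rightarrow> 'v \<Rightarrow> bool) \<Rightarrow> nat" where
  "chromatic_number V E = (LEAST k. colourable V E k)"

text \<open>Vectors of \<open>F^t\<close> are functions \<open>nat \<Rightarrow> F\<close> vanishing at indices \<open>\<ge> t\<close>;
  bilinear form \<open>\<langle>x,y\<rangle> = \<Sum>i<t. x i * y i\<close>.\<close>
definition bil :: "nat \<Rightarrow> (nat \<Rightarrow> 'a::field) \<Rightarrow> (nat \<Rightarrow> 'a) \<Rightarrow> 'a" where
  "bil t x y = (\<Sum>i<t. x i * y i)"

definition fscale :: "'a::field \<Rightarrow> (nat \<Rightarrow> 'a) \<Rightarrow> (nat \<Rightarrow> 'a)" where
  "fscale c x = (\<lambda>i. c * x i)"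

definition orth_rep :: "'v set \<Rightarrow> ('v \<Rightarrow> 'v \<Rightarrow> bool) \<Rightarrow> nat \<Rightarrow> ('v \<Rightarrow> nat \<Rightarrow> 'a::field) \<Rightarrow> bool" where
  "orth_rep V E t u \<longleftrightarrow>
     (\<forall>v\<in>V. \<forall>i\<ge>t. u v i = 0) \<and>
     (\<forall>v\<in>V. bil t (u v) (u v) \<noteq> 0) \<and>
     (\<forall>v\<in>V. \<forall>w\<in>V. E v w \<longrightarrow> bil t (u v) (u w) = 0)"

definition locality :: "'v set \<Rightarrow> ('v \<Rightarrow> 'v \<Rightarrow> bool) \<Rightarrow> ('v \<Rightarrow> nat \<Rightarrow> 'a::field) \<Rightarrow> nat" where
  "locality V E u = Max (insert 0 ((\<lambda>v. vector_space.dim fscale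
       (u ` (insert v (neighbours V E v)))) ` V))"

definition min_locality :: "'v set \<Rightarrow> ('v \<Rightarrow> 'v \<Rightarrow> bool) \<Rightarrow> 'a::field itself \<Rightarrow> nat" where
  "min_locality V E F = (LEAST l. \<exists>t (u :: 'v \<Rightarrow> nat \<Rightarrow> 'a). orth_rep V E t u \<and> locality V E u = l)"

end

theory Submission
  imports Defs
begin

text \<open>If the graph is properly 2-coloured, sending the two colour classes to two orthonormal
  basis vectors of \<open>F\<^sup>2\<close> gives a representation of locality at most 2. Conversely, let \<open>u\<close> have
  locality at most 2. A vector \<open>u\<^sub>v\<close> with \<open>\<langle>u\<^sub>v,u\<^sub>v\<rangle> \<noteq> 0\<close> lies outside the span of any set
  orthogonal to it, so two non-parallel neighbour vectors of \<open>v\<close> together with \<open>u\<^sub>v\<close> would span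
  a 3-dimensional space. Hence all neighbours of \<open>v\<close> are sent to one line, different from the
  line of \<open>u\<^sub>v\<close>. Ordering the finitely many lines and colouring \<open>v\<close> by whether its line comes
  before the line of its neighbours gives a proper 2-colouring.\<close>

interpretation FV: vector_space "fscale :: 'a::field \<Rightarrow> (nat \<Rightarrow> 'a) \<Rightarrow> _"
  by unfold_locales (auto simp: fscale_def fun_eq_iff algebra_simps)

lemma (in vector_space) card_independent_le_dim:
  assumes "finite T" "B \<subseteq> T" "independent B"
  shows "card B \<le> dim T"
proof -
  obtain C where "C \<subseteq> T" "T \<subseteq> span C" "card C = dim T"
    by (rule basis_exists)
  then show ?thesis
    using independent_span_bound[of C B] assms finite_subset by (metis subset_trans)
qed

lemma bil_commute: "bil t x y = bil t y x"
  by (simp add: bil_def mult.commute)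

lemma bil_add_right: "bil t x (y + z) = bil t x y + bil t x z"
  by (simp add: bil_def algebra_simps sum.distrib)

lemma bil_scale_right: "bil t x (fscale c y) = c * bil t x y"
  by (simp add: bil_def fscale_def sum_distrib_left algebra_simps)

lemma bil_span_right_eq_0:
  assumes "\<forall>y\<in>S. bil t x y = 0" and "y \<in> FV.span S"
  shows "bil t x y = 0"
  using assms(2)
proof (induction rule: FV.span_induct)
  show "FV.subspace {y. bil t x y = 0}"
    by (rule FV.subspaceI) (simp add: bil_def, simp_all add: bil_add_right bil_scale_right)
qed (use assms(1) in blast)

lemma not_in_span_if_orthogonal:
  assumes "bil t x x \<noteq> 0" and "\<forall>y\<in>S. bil t x y = 0"
  shows "x \<notin> FV.span S"
  using assms bil_span_right_eq_0 by blast

lemma independent_if_orthogonal: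
  fixes x y z :: "nat \<Rightarrow> 'a::field"
  assumes "bil t x x \<noteq> 0" "bil t x y = 0" "bil t x z = 0"
    and "y \<noteq> 0" "z \<notin> FV.span {y}"
  shows "FV.independent {x, z, y}"
proof (rule FV.independent_insertI)
  show "x \<notin> FV.span {z, y}"
    using assms(1-3) by (intro not_in_span_if_orthogonal) auto
  show "FV.independent {z, y}"
    using assms(4,5) by (simp add: FV.independent_insertI)
qed

lemma locality_le_iff:
  assumes "finite V"
  shows "locality V E u \<le> l \<longleftrightarrow> (\<forall>v\<in>V. FV.dim (u ` insert v (neighbours V E v)) \<le> l)"
  using assms unfolding locality_def by (subst Max_le_iff) auto

lemma neighbour_vectors_collinear:
  assumes "finite V" and rep: "orth_rep V E t u"
    and dim: "FV.dim (u ` insert v (neighbours V E v)) \<le> 2"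
    and "v \<in> V" "a \<in> V" "b \<in> V" "E v a" "E v b"
  shows "u b \<in> FV.span {u a}"
proof (rule ccontr)
  assume b_off_line: "u b \<notin> FV.span {u a}"
  have norms: "bil t (u x) (u x) \<noteq> 0" if "x \<in> V" for x
    using rep that by (simp add: orth_rep_def)
  have orth: "bil t (u v) (u a) = 0" "bil t (u v) (u b) = 0"
    using rep assms(4-8) by (auto simp: orth_rep_def)
  have "u a \<noteq> 0"
    using norms[OF \<open>a \<in> V\<close>] by (auto simp: bil_def)
  then have indep: "FV.independent {u v, u b, u a}"
    using independent_if_orthogonal[OF norms[OF \<open>v \<in> V\<close>] orth(1,2)] b_off_line by blast
  have "u v \<notin> FV.span {u b, u a}"
    using norms[OF \<open>v \<in> V\<close>] orth by (intro not_in_span_if_orthogonal) auto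
  then have "u v \<noteq> u b" "u v \<noteq> u a"
    by (auto intro: FV.span_base)
  moreover have "u b \<noteq> u a"
    using b_off_line FV.span_base[of "u a" "{u a}"] by auto
  ultimately have "card {u v, u b, u a} = 3"
    by simp
  moreover have "{u v, u b, u a} \<subseteq> u ` insert v (neighbours V E v)"
    using assms(5-8) by (auto simp: neighbours_def)
  ultimately have "3 \<le> FV.dim (u ` insert v (neighbours V E v))"
    using FV.card_independent_le_dim[OF _ _ indep] \<open>finite V\<close> by (simp add: neighbours_def)
  then show False
    using dim by simp
qed

text \<open>Colour \<open>v\<close> by whether its label precedes the common label of its neighbours; adjacent
  \<open>v\<close>, \<open>w\<close> then compare the same two labels in opposite directions.\<close>
lemma colourable_2_if_neighbours_share_label:
  fixes L :: "'v \<Rightarrow> 'b"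
  assumes g: "graph V E"
    and adjacent_differ: "\<And>v w. v \<in> V \<Longrightarrow> w \<in> V \<Longrightarrow> E v w \<Longrightarrow> L v \<noteq> L w"
    and neighbours_agree: "\<And>v a b. v \<in> V \<Longrightarrow> a \<in> V \<Longrightarrow> b \<in> V \<Longrightarrow> E v a \<Longrightarrow> E v b \<Longrightarrow> L a = L b"
  shows "colourable V E 2"
proof -
  obtain r :: "'b \<Rightarrow> nat" where r: "inj_on r (L ` V)"
    using finite_imp_inj_to_nat_seg g by (metis finite_imageI graph_def)
  define nb where "nb v = (SOME a. a \<in> V \<and> E v a)" for v
  define col where "col v = (if r (L v) < r (L (nb v)) then 0 else 1 :: nat)" for v
  have nb: "nb v \<in> V \<and> E v (nb v)" if "w \<in> V" "E v w" for v w
    unfolding nb_def using that by (rule someI[of _ w, OF conjI])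
  show ?thesis
    unfolding colourable_def
  proof (intro exI[of _ col] conjI ballI impI)
    fix v w assume vw: "v \<in> V" "w \<in> V" "E v w"
    have wv: "E w v"
      using g vw(3) by (simp add: graph_def)
    have "L (nb v) = L w" "L (nb w) = L v"
      using neighbours_agree nb vw wv by blast+
    moreover have "r (L v) \<noteq> r (L w)"
      using r adjacent_differ[OF vw] vw(1,2) by (auto simp: inj_on_def)
    ultimately show "col v \<noteq> col w"
      by (auto simp: col_def)
  qed (simp add: col_def)
qed

lemma colourable_2_if_locality_le_2:
  assumes g: "graph V E" and rep: "orth_rep V E t u" and "locality V E u \<le> 2"
  shows "colourable V E 2"
proof (rule colourable_2_if_neighbours_share_label[where L = "\<lambda>v. FV.span {u v}"])
  have fin: "finite V"
    using g by (simp add: graph_def)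
  fix v a b assume v: "v \<in> V" and nbs: "a \<in> V" "b \<in> V" "E v a" "E v b"
  have "FV.dim (u ` insert v (neighbours V E v)) \<le> 2"
    using assms v fin by (simp add: locality_le_iff)
  then have "u b \<in> FV.span {u a}" "u a \<in> FV.span {u b}"
    using neighbour_vectors_collinear[OF fin rep _ v] nbs by blast+
  then show "FV.span {u a} = FV.span {u b}"
    by (simp add: FV.span_eq)
next
  fix v w assume "v \<in> V" "w \<in> V" "E v w"
  then have "u w \<notin> FV.span {u v}"
    using rep by (intro not_in_span_if_orthogonal) (auto simp: orth_rep_def bil_commute)
  then show "FV.span {u v} \<noteq> FV.span {u w}"
    using FV.span_base by blast
qed (fact g)

definition unit_vec :: "nat \<Rightarrow> nat \<Rightarrow> 'a::field" where
  "unit_vec k = (\<lambda>i. if i = k then 1 else 0)"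

lemma bil_unit_vec:
  assumes "k < t"
  shows "bil t (unit_vec k) (unit_vec l) = (if k = l then 1 else 0)"
proof -
  have "bil t (unit_vec k) (unit_vec l) = (\<Sum>i<t. if i = k then (if k = l then 1 else 0) else 0 :: 'a)"
    unfolding bil_def by (intro sum.cong) (auto simp: unit_vec_def)
  then show ?thesis
    using assms by simp
qed

lemma orth_rep_unit_vec:
  assumes "\<forall>v\<in>V. c v < k" and "\<forall>v\<in>V. \<forall>w\<in>V. E v w \<longrightarrow> c v \<noteq> c w"
  shows "orth_rep V E k (\<lambda>v. unit_vec (c v) :: nat \<Rightarrow> 'a::field)"
  using assms by (auto simp: orth_rep_def bil_unit_vec) (auto simp: unit_vec_def)

lemma colourable_card:
  assumes "graph V E"
  shows "colourable V E (card V)"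
proof -
  obtain c :: "_ \<Rightarrow> nat" where c: "bij_betw c V {0..<card V}"
    using assms ex_bij_betw_finite_nat unfolding graph_def by blast
  have "c v \<noteq> c w" if "v \<in> V" "w \<in> V" "E v w" for v w
    using assms c that by (auto simp: graph_def bij_betw_def inj_on_def)
  moreover have "c v < card V" if "v \<in> V" for v
    using c that by (auto simp: bij_betw_def)
  ultimately show ?thesis
    unfolding colourable_def by blast
qed

lemma chromatic_number_le_iff:
  assumes "graph V E"
  shows "chromatic_number V E \<le> k \<longleftrightarrow> colourable V E k"
proof
  have "colourable V E (chromatic_number V E)"
    unfolding chromatic_number_def using colourable_card[OF assms] by (rule LeastI)
  then show "chromatic_number V E \<le> k \<Longrightarrow> colourable V E k"
    unfolding colourable_def using less_le_trans by blast
qed (simp add: chromatic_number_def Least_le)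

lemma min_locality_le:
  "orth_rep V E t (u :: 'v \<Rightarrow> nat \<Rightarrow> 'a::field) \<Longrightarrow> min_locality V E TYPE('a) \<le> locality V E u"
  unfolding min_locality_def by (rule Least_le) blast

lemma min_locality_attained:
  assumes "graph V E"
  shows "\<exists>t (u :: 'v \<Rightarrow> nat \<Rightarrow> 'a::field).
           orth_rep V E t u \<and> locality V E u = min_locality V E TYPE('a)"
proof -
  obtain c where "\<forall>v\<in>V. c v < card V" "\<forall>v\<in>V. \<forall>w\<in>V. E v w \<longrightarrow> c v \<noteq> c w"
    using colourable_card[OF assms] unfolding colourable_def by blast
  then have "orth_rep V E (card V) (\<lambda>v. unit_vec (c v) :: nat \<Rightarrow> 'a)"
    by (rule orth_rep_unit_vec)
  then have "\<exists>l t (u :: 'v \<Rightarrow> nat \<Rightarrow> 'a). orth_rep V E t u \<and> locality V E u = l"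
    by blast
  then show ?thesis
    unfolding min_locality_def by (rule LeastI_ex)
qed

lemma min_locality_le_2_if_colourable_2:
  assumes g: "graph V E" and "colourable V E 2"
  shows "min_locality V E TYPE('a::field) \<le> 2"
proof -
  obtain c where c: "\<forall>v\<in>V. c v < (2::nat)" "\<forall>v\<in>V. \<forall>w\<in>V. E v w \<longrightarrow> c v \<noteq> c w"
    using assms(2) unfolding colourable_def by blast
  define u where "u v = (unit_vec (c v) :: nat \<Rightarrow> 'a)" for v
  define B where "B = {unit_vec 0, unit_vec 1 :: nat \<Rightarrow> 'a}"
  have "FV.dim (u ` insert v (neighbours V E v)) \<le> 2" if "v \<in> V" for v
  proof -
    have "u w \<in> B" if "w \<in> V" for w
      using c(1) that by (auto simp: u_def B_def less_2_cases_iff)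
    then have "u ` insert v (neighbours V E v) \<subseteq> B"
      using \<open>v \<in> V\<close> by (auto simp: neighbours_def)
    then have "FV.dim (u ` insert v (neighbours V E v)) \<le> card B"
      by (intro FV.dim_le_card) (auto simp: B_def intro: FV.span_base)
    also have "card B \<le> 2"
      by (simp add: B_def card_insert_if)
    finally show ?thesis .
  qed
  then have "locality V E u \<le> 2"
    using g by (simp add: locality_le_iff graph_def)
  moreover have "orth_rep V E 2 u"
    unfolding u_def by (rule orth_rep_unit_vec[OF c])
  ultimately show ?thesis
    using min_locality_le[of V E 2 u] by simp
qed

theorem mainTheorem6:
  fixes V :: "'v set" and E :: "'v \<Rightarrow> 'v \<Rightarrow> bool"
  assumes "graph V E"
  shows "chromatic_number V E \<le> 2 \<longleftrightarrow> min_locality V E TYPE('a::field) \<le> 2"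
proof
  assume "chromatic_number V E \<le> 2"
  then show "min_locality V E TYPE('a) \<le> 2"
    using assms chromatic_number_le_iff min_locality_le_2_if_colourable_2 by blast
next
  assume "min_locality V E TYPE('a) \<le> 2"
  moreover obtain t and u :: "'v \<Rightarrow> nat \<Rightarrow> 'a"
    where "orth_rep V E t u" "locality V E u = min_locality V E TYPE('a)"
    using min_locality_attained[OF assms] by blast
  ultimately show "chromatic_number V E \<le> 2"
    using assms chromatic_number_le_iff colourable_2_if_locality_le_2 by fastforce
qed

end
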